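(* Let $R\subseteq\mathbb N$ be a congruence-periodic sparse predicate, $d\in\mathbb N^+$, $\tilde R\subseteq^dR$, $n\in\mathbb N^+$, and $\mathbf A,\mathbf B$ $n$-tuples of operators on $R$. Then there is $\Delta_0$ such that for every $\Delta\in d\mathbb N$ with $\Delta\ge\Delta_0$ the following holds. For all $x,y_1,y_2\in\mathbb Z$, $u_1,\dots,u_n\in\tilde R\cup\{-\infty\}$ and $v_1,\dots,v_n\in\tilde R\cup\{+\infty\}$, if there is $z\in\tilde R^n_\Delta$ with $$y_1+\mathbf A\cdot z<x<y_2+\mathbf B\cdot z\ \wedge\ \bigwedge_{i=1}^nu_i\le z_i\le v_i\qquad(\dagger)$$ then either $v_1=+\infty$ and ($A_1=_R0$ and $B_1>_R0$, or $A_1<_R0$ and $B_1=_R0$), or there is $z\in\tilde R^n_\Delta$ satisfying $(\dagger)$ and one of: (i) $z_i=\sigma^\Delta z_{i+1}$ for some $1\le i\le n$ (with $z_{n+1}:=\min\tilde R$); (ii) $z_i\in\{u_i,v_i\}$ for some $1\le i\le n$; (iii) all $A_i,B_i$ are $\neq_R0$, and $z=P_\Delta(x-y_1;\mathbf A,\tilde R)$ or $z=P_\Delta(y_2-x;-\mathbf B,\tilde R)$.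
   Context: Let $R\subseteq\mathbb N$ be infinite, enumerated increasingly as $(r_n)_{n\in\mathbb N}$; $\sigma:R\to R$ is the successor map, $\sigma^k$ its iterate ($\sigma^0=\mathrm{id}$). An operator on $R$ is a function $R\to\mathbb Z$, $z\mapsto\sum_{i=0}^ma_i\sigma^i(z)$, $a_i\in\mathbb Z$. $A=_R0$ means $Az=0$ for all $z\in R$; $A>_R0$ (resp. $<_R0$) means $Az>0$ (resp. $<0$) for all but finitely many $z$. $R$ is sparse if every operator $A$ satisfies (S1) $A=_R0$ or $A>_R0$ or $A<_R0$, and (S2) if $A>_R0$ there is $\Delta$ with $A(\sigma^\Delta z)>z$ for all $z\in R$. Congruence-periodic: for each $m\in\mathbb N^+$, $(r_n\bmod m)$ is eventually periodic. $\tilde R\subseteq^dR$ means $\tilde R=\{r_{N+dt}:t\in\mathbb N\}$ for some $N\in\mathbb N$. $\mathbf A\cdot z=\sum A_iz_i$; $\mathbf A\cdot S=\{\mathbf A\cdot z:z\in S\}$; $-\mathbf B=(-B_1,\dots,-B_n)$. $\tilde R^n_\Delta=\{z\in\tilde R^n:z_i\ge\sigma^\Delta z_{i+1}\ (1\le i\le n)\}$ with $z_{n+1}:=\min\tilde R$. For $\mathbf A$ with all entries $\neq_R0$ and $\Delta$ large enough that $z\mapsto\mathbf A\cdot z$ is injective on $R^n_\Delta$: $\min_{\mathbf A}S$/$\max_{\mathbf A}S$ is the unique $z\in S$ minimising/maximising $\mathbf A\cdot z$ (when bounded), and $P_\Delta(x;\mathbf A,\tilde R)=\max_{\mathbf A}\{z\in\tilde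 R^n_\Delta:\mathbf A\cdot z<x\}$ if $x>\inf\mathbf A\cdot\tilde R^n_\Delta$, and $\min_{\mathbf A}\tilde R^n_\Delta$ otherwise. *)

theory Defs
  imports Main
begin

definition succR :: "nat set \<Rightarrow> nat \<Rightarrow> nat" where
  "succR R z = (LEAST r. r \<in> R \<and> z < r)"

definition enumR :: "nat set \<Rightarrow> nat \<Rightarrow> nat" where
  "enumR R n = (succR R ^^ n) (LEAST r. r \<in> R)"

(* An operator sum_{i=0}^m a_i sigma^i is represented by its coefficient list [a_0,...,a_m]. *)
type_synonym operator = "int list"

definition op_app :: "nat set \<Rightarrow> operator \<Rightarrow> nat \<Rightarrow> int" where
  "op_app R a z = (\<Sum>i<length a. a ! i * int ((succR R ^^ i) z))"

definition op_eq0 :: "nat set \<Rightarrow> operator \<Rightarrow> bool" where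
  "op_eq0 R a \<longleftrightarrow> (\<forall>z\<in>R. op_app R a z = 0)"

definition op_pos :: "nat set \<Rightarrow> operator \<Rightarrow> bool" where
  "op_pos R a \<longleftrightarrow> finite {z\<in>R. \<not> op_app R a z > 0}"

definition op_neg :: "nat set \<Rightarrow> operator \<Rightarrow> bool" where
  "op_neg R a \<longleftrightarrow> finite {z\<in>R. \<not> op_app R a z < 0}"

definition sparse :: "nat set \<Rightarrow> bool" where
  "sparse R \<longleftrightarrow> infinite R \<and>
     (\<forall>a. (op_eq0 R a \<or> op_pos R a \<or> op_neg R a) \<and>
          (op_pos R a \<longrightarrow> (\<exists>D. \<forall>z\<in>R. op_app R a ((succR R ^^ D) z) > int z)))"

definition congruence_periodic :: "nat set \<Rightarrow> bool" where
  "congruence_periodic R \<longleftrightarrow>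
     (\<forall>m>0. \<exists>N p. p > 0 \<and> (\<forall>k\<ge>N. enumR R (k + p) mod m = enumR R k mod m))"

definition sub_d :: "nat set \<Rightarrow> nat \<Rightarrow> nat set \<Rightarrow> bool" where
  "sub_d Rt d R \<longleftrightarrow> (\<exists>N. Rt = {enumR R (N + d * t) | t. True})"

(* n-tuples are lists of length n, 0-indexed: list index i corresponds to paper index i+1. *)
definition dotR :: "nat set \<Rightarrow> operator list \<Rightarrow> nat list \<Rightarrow> int" where
  "dotR R A z = (\<Sum>i<length z. op_app R (A ! i) (z ! i))"

definition neg_ops :: "operator list \<Rightarrow> operator list" where
  "neg_ops B = map (map uminus) B"

(* z_{i+1} with the convention z_{n+1} := min Rt (0-indexed: next entry, or min Rt at the end) *)
definition znext :: "nat set \<Rightarrow> nat list \<Rightarrow> nat \<Rightarrow> nat" where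
  "znext Rt z i = (if Suc i < length z then z ! Suc i else (LEAST r. r \<in> Rt))"

definition tuples :: "nat set \<Rightarrow> nat set \<Rightarrow> nat \<Rightarrow> nat \<Rightarrow> nat list set" where
  "tuples R Rt n D = {z. length z = n \<and> set z \<subseteq> Rt \<and>
       (\<forall>i<n. z ! i \<ge> (succR R ^^ D) (znext Rt z i))}"

definition maxA :: "nat set \<Rightarrow> operator list \<Rightarrow> nat list set \<Rightarrow> nat list" where
  "maxA R A S = (THE z. z \<in> S \<and> (\<forall>w\<in>S. dotR R A w \<le> dotR R A z))"

definition minA :: "nat set \<Rightarrow> operator list \<Rightarrow> nat list set \<Rightarrow> nat list" where
  "minA R A S = (THE z. z \<in> S \<and> (\<forall>w\<in>S. dotR R A z \<le> dotR R A w))"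

(* P_Delta(x; A, Rt); "x > inf A.Rt^n_Delta" is written as "some element of A.Rt^n_Delta is < x" *)
definition P_Delta :: "nat set \<Rightarrow> nat set \<Rightarrow> nat \<Rightarrow> nat \<Rightarrow> int \<Rightarrow> operator list \<Rightarrow> nat list" where
  "P_Delta R Rt n D x A =
     (if \<exists>z\<in>tuples R Rt n D. dotR R A z < x
      then maxA R A {z\<in>tuples R Rt n D. dotR R A z < x}
      else minA R A (tuples R Rt n D))"

(* u_i \<in> Rt \<union> {-\<infinity>} encoded as nat option with None = -\<infinity>;
   v_i \<in> Rt \<union> {+\<infinity>} encoded as nat option with None = +\<infinity>. *)
definition lower_ok :: "nat option \<Rightarrow> nat \<Rightarrow> bool" where
  "lower_ok u a = (case u of None \<Rightarrow> True | Some b \<Rightarrow> b \<le> a)"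

definition upper_ok :: "nat option \<Rightarrow> nat \<Rightarrow> bool" where
  "upper_ok v a = (case v of None \<Rightarrow> True | Some b \<Rightarrow> a \<le> b)"

definition dagger :: "nat set \<Rightarrow> operator list \<Rightarrow> operator list \<Rightarrow> int \<Rightarrow> int \<Rightarrow> int
    \<Rightarrow> nat option list \<Rightarrow> nat option list \<Rightarrow> nat list \<Rightarrow> bool" where
  "dagger R A B x y1 y2 u v z \<longleftrightarrow>
     y1 + dotR R A z < x \<and> x < y2 + dotR R B z \<and>
     (\<forall>i<length z. lower_ok (u ! i) (z ! i) \<and> upper_ok (v ! i) (z ! i))"

end

(*
  Enumerate Rt increasingly as e 0 < e 1 < ..., so e t = r (N + d t). For Delta = d * dl the tuples
  of Rt^n_Delta are the images under map e of the index tuples k with k_i >= k_(i+1) + dl (and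
  k_(n+1) = 0), and A . z becomes the weight sum_i a_i (k_i) with a_i k = A_i (e k).

  Sparseness gives every operator C a sign (=_R 0, >_R 0 or <_R 0), and the difference operator
  sigma^d C - C of a nonzero C has the sign of C and eventually exceeds any multiple of sigma^c.
  Hence for large dl each a_i is zero or strictly monotone from dl on, with steps larger than 2 n
  times a bound for all later coordinates: weights are then ordered lexicographically, and the same
  holds for -B.

  If some coordinate can be moved in a direction that neither
  increases A . z nor decreases B . z, and is bounded in that direction, moving it until a
  constraint becomes tight gives (i) or (ii). A zero a_i or b_i always allows such a move, except
  when it concerns increasing z_1 and v_1 = +infinity, which is the exceptional alternative.
  Otherwise all a_i, b_i are strictly monotone: take a solution maximising A . z and move its last
  coordinate one step in the direction increasing a_n. Either a constraint of (i)/(ii) blocks the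
  step, or the step leaves the solution set through A . z < x - y1 or B . z > x - y2, and
  lexicographic dominance identifies the solution as P_Delta(x - y1; A) or P_Delta(y2 - x; -B).
*)

theory Submission
  imports Defs
begin

section \<open>Index tuples\<close>

definition next_entry :: "nat list \<Rightarrow> nat \<Rightarrow> nat" where
  "next_entry ks i = (if Suc i < length ks then ks ! Suc i else 0)"

text \<open>For an enumeration e of Rt, map e maps index_tuples n dl onto Rt^n_Delta with Delta = d * dl
  (see tuples_eq_image); the convention z_(n+1) = min Rt becomes next_entry ks (n - 1) = 0.\<close>

definition index_tuples :: "nat \<Rightarrow> nat \<Rightarrow> nat list set" where
  "index_tuples n dl = {ks. length ks = n \<and> (\<forall>i<n. next_entry ks i + dl \<le> ks ! i)}"

definition in_box :: "nat option list \<Rightarrow> nat option list \<Rightarrow> nat list \<Rightarrow> bool" where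
  "in_box lo hi ks \<longleftrightarrow> (\<forall>i<length ks. lower_ok (lo ! i) (ks ! i) \<and> upper_ok (hi ! i) (ks ! i))"

definition box_tuples :: "nat \<Rightarrow> nat \<Rightarrow> nat option list \<Rightarrow> nat option list \<Rightarrow> nat list set" where
  "box_tuples n dl lo hi = {ks \<in> index_tuples n dl. in_box lo hi ks}"

definition on_boundary :: "nat \<Rightarrow> nat \<Rightarrow> nat option list \<Rightarrow> nat option list \<Rightarrow> nat list \<Rightarrow> bool" where
  "on_boundary n dl lo hi ks \<longleftrightarrow>
     (\<exists>i<n. ks ! i = next_entry ks i + dl) \<or> (\<exists>i<n. lo ! i = Some (ks ! i) \<or> hi ! i = Some (ks ! i))"

lemma index_tuples_length: "ks \<in> index_tuples n dl \<Longrightarrow> length ks = n"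
  by (simp add: index_tuples_def)

lemma index_tuples_next: "ks \<in> index_tuples n dl \<Longrightarrow> i < n \<Longrightarrow> next_entry ks i + dl \<le> ks ! i"
  by (simp add: index_tuples_def)

lemma index_tuples_ge: "ks \<in> index_tuples n dl \<Longrightarrow> i < n \<Longrightarrow> dl \<le> ks ! i"
  using index_tuples_next by fastforce

lemma index_tuples_chain:
  assumes "ks \<in> index_tuples n dl" and "i < k" and "k < n"
  shows "ks ! k + dl \<le> ks ! i"
  using assms(2,3)
proof (induction k)
  case (Suc k)
  have "ks ! Suc k + dl \<le> ks ! k"
    using index_tuples_next[OF assms(1), of k] Suc.prems index_tuples_length[OF assms(1)]
    by (simp add: next_entry_def)
  with Suc show ?case
    by (cases "i = k") auto
qed simp

lemma index_tuples_decrement: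
  assumes ks: "ks \<in> index_tuples n dl" and j: "j < n" and "ks ! j \<noteq> next_entry ks j + dl"
  shows "ks[j := ks ! j - 1] \<in> index_tuples n dl"
proof -
  have "next_entry (ks[j := ks ! j - 1]) i + dl \<le> ks[j := ks ! j - 1] ! i" if i: "i < n" for i
  proof -
    have "next_entry (ks[j := ks ! j - 1]) i \<le> next_entry ks i"
      by (cases "Suc i = j") (auto simp: next_entry_def)
    then show ?thesis
      using index_tuples_next[OF ks i] index_tuples_next[OF ks j] assms(3) i
        index_tuples_length[OF ks]
      by (cases "i = j") (auto simp: next_entry_def nth_list_update)
  qed
  then show ?thesis
    using index_tuples_length[OF ks] by (simp add: index_tuples_def)
qed

lemma index_tuples_increment:
  assumes ks: "ks \<in> index_tuples n dl" and j: "j < n"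
    and "0 < j \<Longrightarrow> ks ! (j - 1) \<noteq> ks ! j + dl"
  shows "ks[j := Suc (ks ! j)] \<in> index_tuples n dl"
proof -
  have len: "length ks = n"
    using index_tuples_length[OF ks] .
  have "next_entry (ks[j := Suc (ks ! j)]) i + dl \<le> ks[j := Suc (ks ! j)] ! i" if i: "i < n" for i
  proof (cases "Suc i = j")
    case True
    then show ?thesis
      using index_tuples_next[OF ks i] assms(3) len j by (auto simp: next_entry_def)
  next
    case False
    then show ?thesis
      using index_tuples_next[OF ks i] len i
      by (cases "i = j") (auto simp: next_entry_def nth_list_update)
  qed
  then show ?thesis
    using len by (simp add: index_tuples_def)
qed

lemma in_box_update:
  assumes "in_box lo hi ks" and "lower_ok (lo ! j) k" and "upper_ok (hi ! j) k"
  shows "in_box lo hi (ks[j := k])"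
  using assms by (cases "j < length ks") (auto simp: in_box_def nth_list_update)

lemma in_box_decrement:
  assumes box: "in_box lo hi ks" and j: "j < length ks" and "lo ! j \<noteq> Some (ks ! j)"
  shows "in_box lo hi (ks[j := ks ! j - 1])"
proof (rule in_box_update[OF box])
  have "lower_ok (lo ! j) (ks ! j)" "upper_ok (hi ! j) (ks ! j)"
    using box j by (auto simp: in_box_def)
  then show "lower_ok (lo ! j) (ks ! j - 1)" "upper_ok (hi ! j) (ks ! j - 1)"
    using assms(3) by (auto simp: lower_ok_def upper_ok_def split: option.splits)
qed

lemma in_box_increment:
  assumes box: "in_box lo hi ks" and j: "j < length ks" and "hi ! j \<noteq> Some (ks ! j)"
  shows "in_box lo hi (ks[j := Suc (ks ! j)])"
proof (rule in_box_update[OF box])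
  have "lower_ok (lo ! j) (ks ! j)" "upper_ok (hi ! j) (ks ! j)"
    using box j by (auto simp: in_box_def)
  then show "lower_ok (lo ! j) (Suc (ks ! j))" "upper_ok (hi ! j) (Suc (ks ! j))"
    using assms(3) by (auto simp: lower_ok_def upper_ok_def split: option.splits)
qed

lemma box_tuples_decrement:
  assumes ks: "ks \<in> box_tuples n dl lo hi" and j: "j < n" and free: "\<not> on_boundary n dl lo hi ks"
  shows "ks[j := ks ! j - 1] \<in> box_tuples n dl lo hi" and "0 < ks ! j"
proof -
  have it: "ks \<in> index_tuples n dl" and box: "in_box lo hi ks"
    using ks by (auto simp: box_tuples_def)
  have "ks ! j \<noteq> next_entry ks j + dl" and "lo ! j \<noteq> Some (ks ! j)"
    using free j by (auto simp: on_boundary_def)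
  then show "ks[j := ks ! j - 1] \<in> box_tuples n dl lo hi" and "0 < ks ! j"
    using index_tuples_decrement[OF it j] in_box_decrement[OF box] index_tuples_next[OF it j] j
      index_tuples_length[OF it]
    by (auto simp: box_tuples_def)
qed

lemma box_tuples_increment:
  assumes ks: "ks \<in> box_tuples n dl lo hi" and j: "j < n" and free: "\<not> on_boundary n dl lo hi ks"
  shows "ks[j := Suc (ks ! j)] \<in> box_tuples n dl lo hi"
proof -
  have it: "ks \<in> index_tuples n dl" and box: "in_box lo hi ks"
    using ks by (auto simp: box_tuples_def)
  have "0 < j \<Longrightarrow> ks ! (j - 1) \<noteq> ks ! j + dl" and "hi ! j \<noteq> Some (ks ! j)"
    using free j index_tuples_length[OF it]
    by (auto simp: on_boundary_def next_entry_def dest!: spec[of _ "j - 1"])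
  then show ?thesis
    using index_tuples_increment[OF it j] in_box_increment[OF box] j index_tuples_length[OF it]
    by (auto simp: box_tuples_def)
qed

lemma boundary_reached_decreasing:
  assumes "ks0 \<in> S" and S: "S \<subseteq> box_tuples n dl lo hi" and j: "j < n"
    and closed: "\<And>ks. ks \<in> S \<Longrightarrow> ks[j := ks ! j - 1] \<in> box_tuples n dl lo hi \<Longrightarrow>
      ks[j := ks ! j - 1] \<in> S"
  shows "\<exists>ks\<in>S. on_boundary n dl lo hi ks"
proof (rule ccontr)
  assume none: "\<not> ?thesis"
  obtain ks where ks: "ks \<in> S" and least: "\<And>ks'. ks' \<in> S \<Longrightarrow> ks ! j \<le> ks' ! j"
    using ex_has_least_nat[of "\<lambda>ks. ks \<in> S" ks0 "\<lambda>ks. ks ! j"] assms(1) by blast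
  have box: "ks \<in> box_tuples n dl lo hi"
    using ks S by blast
  have free: "\<not> on_boundary n dl lo hi ks"
    using none ks by blast
  have "ks[j := ks ! j - 1] \<in> S"
    using closed[OF ks box_tuples_decrement(1)[OF box j free]] .
  then show False
    using least box_tuples_decrement(2)[OF box j free] j box
    by (fastforce simp: box_tuples_def index_tuples_def)
qed

lemma boundary_reached_increasing:
  assumes "ks0 \<in> S" and S: "S \<subseteq> box_tuples n dl lo hi" and j: "j < n"
    and bounded: "0 < j \<or> hi ! 0 \<noteq> None"
    and closed: "\<And>ks. ks \<in> S \<Longrightarrow> ks[j := Suc (ks ! j)] \<in> box_tuples n dl lo hi \<Longrightarrow>
      ks[j := Suc (ks ! j)] \<in> S"
  shows "\<exists>ks\<in>S. on_boundary n dl lo hi ks"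
proof (rule ccontr)
  assume none: "\<not> ?thesis"
  define cap where "cap ks = (if 0 < j then ks ! (j - 1) else the (hi ! 0))" for ks
  obtain ks where ks: "ks \<in> S" and least: "\<And>ks'. ks' \<in> S \<Longrightarrow> cap ks - ks ! j \<le> cap ks' - ks' ! j"
    using ex_has_least_nat[of "\<lambda>ks. ks \<in> S" ks0 "\<lambda>ks. cap ks - ks ! j"] assms(1) by blast
  have box: "ks \<in> box_tuples n dl lo hi"
    using ks S by blast
  have it: "ks \<in> index_tuples n dl" and len: "length ks = n"
    using box by (auto simp: box_tuples_def index_tuples_def)
  have free: "\<not> on_boundary n dl lo hi ks"
    using none ks by blast
  have "ks[j := Suc (ks ! j)] \<in> S"
    using closed[OF ks box_tuples_increment[OF box j free]] .
  moreover have "ks ! j < cap ks"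
  proof (cases "0 < j")
    case True
    then have "ks ! j + dl \<le> ks ! (j - 1)" and "ks ! (j - 1) \<noteq> ks ! j + dl"
      using index_tuples_next[OF it, of "j - 1"] free j len
      by (auto simp: next_entry_def on_boundary_def dest!: spec[of _ "j - 1"])
    then show ?thesis
      using True by (simp add: cap_def)
  next
    case False
    then have "upper_ok (hi ! 0) (ks ! 0)" and "hi ! 0 \<noteq> Some (ks ! 0)"
      using box free j by (auto simp: box_tuples_def in_box_def len on_boundary_def)
    then show ?thesis
      using False bounded by (auto simp: cap_def upper_ok_def)
  qed
  ultimately show False
    using least[of "ks[j := Suc (ks ! j)]"] j len by (cases "0 < j") (auto simp: cap_def)
qed

section \<open>Trends and lexicographic dominance\<close>

definition weight :: "(nat \<Rightarrow> nat \<Rightarrow> int) \<Rightarrow> nat list \<Rightarrow> int" where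
  "weight a ks = (\<Sum>i<length ks. a i (ks ! i))"

lemma weight_update:
  assumes "j < length ks"
  shows "weight a (ks[j := k]) = weight a ks - a j (ks ! j) + a j k"
proof -
  have "weight a (ks[j := k]) - weight a ks = (\<Sum>i<length ks. a i (ks[j := k] ! i) - a i (ks ! i))"
    by (simp add: weight_def sum_subtractf)
  also have "\<dots> = (\<Sum>i<length ks. if i = j then a j k - a j (ks ! j) else 0)"
    by (rule sum.cong) (auto simp: nth_list_update)
  finally show ?thesis
    using assms by simp
qed

lemma weight_uminus: "weight (\<lambda>i k. - a i k) ks = - weight a ks"
  by (simp add: weight_def sum_negf)

definition trend :: "nat \<Rightarrow> int \<Rightarrow> (nat \<Rightarrow> int) \<Rightarrow> bool" where
  "trend dl t f \<longleftrightarrow> (\<forall>k\<ge>dl. sgn (f (Suc k) - f k) = t)"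

lemma trend_values: "trend dl t f \<Longrightarrow> t = -1 \<or> t = 0 \<or> t = 1"
proof -
  assume "trend dl t f"
  then have "sgn (f (Suc dl) - f dl) = t"
    by (simp add: trend_def)
  then show ?thesis
    by (auto simp: sgn_if split: if_splits)
qed

lemma trend_uminus: "trend dl t f \<Longrightarrow> trend dl (- t) (\<lambda>k. - f k)"
  by (auto simp: trend_def sgn_if)

lemma trend_if_steps_positive:
  assumes "t = -1 \<or> t = 1" and "\<And>k. dl \<le> k \<Longrightarrow> 0 < t * (f (Suc k) - f k)"
  shows "trend dl t f"
  unfolding trend_def
proof (intro allI impI)
  fix k
  assume "dl \<le> k"
  then have "0 < t * (f (Suc k) - f k)"
    by (rule assms(2))
  then show "sgn (f (Suc k) - f k) = t"
    using assms(1) by (auto simp: zero_less_mult_iff sgn_if)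
qed

lemma trend_mono:
  assumes "trend dl t f" and "0 \<le> t" and "dl \<le> k" and "k \<le> k'"
  shows "f k \<le> f k'"
  using lift_Suc_mono_le_ivl[of "{dl..}" f k k'] assms
  by (fastforce simp: trend_def sgn_if split: if_splits)

lemma trend_antimono:
  assumes "trend dl t f" and "t \<le> 0" and "dl \<le> k" and "k \<le> k'"
  shows "f k' \<le> f k"
  using lift_Suc_antimono_le_ivl[of "{dl..}" f k k'] assms
  by (fastforce simp: trend_def sgn_if split: if_splits)

lemma trend_strict_mono:
  assumes "trend dl t f" and "0 < t" and "dl \<le> k" and "k < k'"
  shows "f k < f k'"
  using lift_Suc_mono_less_ivl[of "{dl..}" f k k'] assms
  by (fastforce simp: trend_def sgn_if split: if_splits)

lemma trend_strict_antimono: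
  assumes "trend dl t f" and "t < 0" and "dl \<le> k" and "k < k'"
  shows "f k' < f k"
  using trend_strict_mono[OF trend_uminus[OF assms(1)]] assms(2-) by simp

lemma trend_inj:
  assumes "trend dl t f" and "t \<noteq> 0" and "dl \<le> k" and "dl \<le> k'" and "f k = f k'"
  shows "k = k'"
proof (rule ccontr)
  assume "k \<noteq> k'"
  then consider "k < k'" | "k' < k"
    by linarith
  then show False
    using assms trend_strict_mono[OF assms(1)] trend_strict_antimono[OF assms(1)]
    by cases (fastforce, fastforce)
qed

lemma trend_less_imp_less:
  assumes "trend dl t f" and "0 \<le> t" and "dl \<le> x" and "f y < f x"
  shows "y < x"
proof (rule ccontr)
  assume "\<not> y < x"
  then have "f x \<le> f y"
    using trend_mono[OF assms(1-3)] by simp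
  with assms(4) show False
    by simp
qed

lemma trend_less_imp_greater:
  assumes "trend dl t f" and "t \<le> 0" and "dl \<le> y" and "f y < f x"
  shows "x < y"
proof (rule ccontr)
  assume "\<not> x < y"
  then have "f x \<le> f y"
    using trend_antimono[OF assms(1-3)] by simp
  with assms(4) show False
    by simp
qed

lemma trend_adjacent_le:
  assumes tr: "trend dl t f" and "dl \<le> k" and "dl \<le> k'" and "dl \<le> m"
    and adj: "k' = Suc k \<or> k = Suc k'" and up: "f k < f k'" and above: "f k < f m"
  shows "f k' \<le> f m"
proof (cases "0 \<le> t")
  case True
  then have "k < k'" and "k < m"
    using trend_less_imp_less[OF tr] assms(3,4) up above by auto
  then show ?thesis
    using trend_mono[OF tr True assms(3)] adj by simp
next
  case False
  then have "k' < k" and "m < k"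
    using trend_less_imp_greater[OF tr] assms(2) up above by auto
  then show ?thesis
    using trend_antimono[OF tr _ assms(4)] False adj by simp
qed

definition lex_dominant :: "nat \<Rightarrow> nat \<Rightarrow> (nat \<Rightarrow> nat \<Rightarrow> int) \<Rightarrow> bool" where
  "lex_dominant n dl a \<longleftrightarrow> (\<forall>w\<in>index_tuples n dl. \<forall>w'\<in>index_tuples n dl. \<forall>i<n.
     take i w = take i w' \<longrightarrow> a i (w ! i) < a i (w' ! i) \<longrightarrow> weight a w < weight a w')"

lemma lex_dominantD:
  assumes "lex_dominant n dl a" and "w \<in> index_tuples n dl" and "w' \<in> index_tuples n dl"
    and "i < n" and "take i w = take i w'" and "a i (w ! i) < a i (w' ! i)"
  shows "weight a w < weight a w'"
  using assms(1)[unfolded lex_dominant_def, rule_format, OF assms(2-6)] .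

lemma weight_diff_after_common_prefix:
  assumes "length w = n" and "length w' = n" and "i < n" and "take i w = take i w'"
  shows "weight a w' - weight a w =
    (a i (w' ! i) - a i (w ! i)) + (\<Sum>k\<in>{Suc i..<n}. a k (w' ! k) - a k (w ! k))"
proof -
  define diff where "diff k = a k (w' ! k) - a k (w ! k)" for k
  have "weight a w' - weight a w = (\<Sum>k<n. diff k)"
    using assms(1,2) by (simp add: weight_def diff_def sum_subtractf)
  also have "\<dots> = (\<Sum>k<i. diff k) + diff i + (\<Sum>k\<in>{Suc i..<n}. diff k)"
    using sum.atLeastLessThan_concat[of 0 "Suc i" n diff] assms(3) by (simp add: lessThan_atLeast0)
  also have "(\<Sum>k<i. diff k) = 0"
  proof (rule sum.neutral, rule ballI)
    fix k
    assume "k \<in> {..<i}"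
    then have "w ! k = w' ! k"
      using assms(4) by (metis lessThan_iff nth_take)
    then show "diff k = 0"
      by (simp add: diff_def)
  qed
  finally show ?thesis
    by (simp add: diff_def)
qed

lemma weight_tail_bound:
  assumes "mono bnd" and bound: "\<And>i k. i < n \<Longrightarrow> \<bar>a i k\<bar> \<le> bnd k"
    and w: "w \<in> index_tuples n dl" and w': "w' \<in> index_tuples n dl" and i: "i < n"
  shows "\<bar>\<Sum>k\<in>{Suc i..<n}. a k (w' ! k) - a k (w ! k)\<bar> \<le> 2 * int n * bnd (max (w ! i) (w' ! i) - dl)"
proof -
  let ?p = "max (w ! i) (w' ! i)"
  have later: "\<bar>a k (w' ! k) - a k (w ! k)\<bar> \<le> 2 * bnd (?p - dl)" if k: "k \<in> {Suc i..<n}" for k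
  proof -
    have "w ! k \<le> ?p - dl" and "w' ! k \<le> ?p - dl"
      using index_tuples_chain[OF w, of i k] index_tuples_chain[OF w', of i k] k by auto
    then have "bnd (w ! k) \<le> bnd (?p - dl)" and "bnd (w' ! k) \<le> bnd (?p - dl)"
      using \<open>mono bnd\<close> by (auto dest: monoD)
    then show ?thesis
      using bound[of k "w ! k"] bound[of k "w' ! k"] k by simp
  qed
  have "\<bar>\<Sum>k\<in>{Suc i..<n}. a k (w' ! k) - a k (w ! k)\<bar> \<le>
      (\<Sum>k\<in>{Suc i..<n}. \<bar>a k (w' ! k) - a k (w ! k)\<bar>)"
    by (rule sum_abs)
  also have "\<dots> \<le> (\<Sum>k\<in>{Suc i..<n}. 2 * bnd (?p - dl))"
    by (rule sum_mono) (rule later)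
  also have "\<dots> \<le> 2 * int n * bnd (?p - dl)"
    using bound[OF i, of "?p - dl"] by (simp add: mult_right_mono)
  finally show ?thesis .
qed

lemma step_bound_le_difference:
  fixes f m :: "nat \<Rightarrow> int"
  assumes t: "t = -1 \<or> t = 1" and step: "\<And>k. dl \<le> k \<Longrightarrow> m (Suc k - dl) < t * (f (Suc k) - f k)"
    and m: "\<And>k. 0 \<le> m k" and "dl \<le> x" and "dl \<le> y" and less: "f x < f y"
  shows "m (max x y - dl) < f y - f x"
proof -
  let ?p = "max x y"
  have tr: "trend dl t f"
  proof (rule trend_if_steps_positive[OF t])
    fix k
    assume "dl \<le> k"
    then show "0 < t * (f (Suc k) - f k)"
      using step[of k] m[of "Suc k - dl"] by linarith
  qed
  have "x \<noteq> y"
    using less by auto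
  then have top: "Suc (?p - 1) = ?p" and below_top: "dl \<le> ?p - 1"
    using assms(4,5) by auto
  have "m (?p - dl) < t * (f ?p - f (?p - 1))"
    using step[OF below_top] unfolding top .
  also have "\<dots> \<le> f y - f x"
    using t
  proof
    assume "t = -1"
    then have "y < x"
      using trend_less_imp_greater[OF tr _ assms(4) less] by simp
    then show ?thesis
      using trend_antimono[OF tr _ assms(5), of "?p - 1"] \<open>t = -1\<close> by simp
  next
    assume "t = 1"
    then have "x < y"
      using trend_less_imp_less[OF tr _ assms(5) less] by simp
    then show ?thesis
      using trend_mono[OF tr _ assms(4), of "?p - 1"] \<open>t = 1\<close> by simp
  qed
  finally show ?thesis .
qed

text \<open>The entries after position i of an index tuple lie dl below its i-th entry, so their total
  change is at most 2 n bnd; a step of a nonzero a i at the top entry outweighs it.\<close>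

lemma lex_dominant_if_steps_dominate:
  fixes a :: "nat \<Rightarrow> nat \<Rightarrow> int" and bnd :: "nat \<Rightarrow> int"
  assumes "mono bnd" and bound: "\<And>i k. i < n \<Longrightarrow> \<bar>a i k\<bar> \<le> bnd k"
    and steps: "\<And>i. i < n \<Longrightarrow> (\<forall>k. a i k = 0) \<or>
      (\<exists>t\<in>{-1, 1}. \<forall>k\<ge>dl. 2 * int n * bnd (Suc k - dl) < t * (a i (Suc k) - a i k))"
  shows "lex_dominant n dl a"
  unfolding lex_dominant_def
proof (intro ballI allI impI)
  fix w w' i
  assume w: "w \<in> index_tuples n dl" and w': "w' \<in> index_tuples n dl" and i: "i < n"
    and prefix: "take i w = take i w'" and less: "a i (w ! i) < a i (w' ! i)"
  obtain t where t: "t = -1 \<or> t = 1"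
    and step: "\<And>k. dl \<le> k \<Longrightarrow> 2 * int n * bnd (Suc k - dl) < t * (a i (Suc k) - a i k)"
    using steps[OF i] less by fastforce
  have "0 \<le> bnd k" for k
    using bound[OF i, of k] by simp
  then have "2 * int n * bnd (max (w ! i) (w' ! i) - dl) < a i (w' ! i) - a i (w ! i)"
    using w w' i less by (intro step_bound_le_difference[OF t step]) (auto simp: index_tuples_ge)
  moreover have "\<bar>\<Sum>k\<in>{Suc i..<n}. a k (w' ! k) - a k (w ! k)\<bar> \<le>
      2 * int n * bnd (max (w ! i) (w' ! i) - dl)"
    by (rule weight_tail_bound[OF assms(1) _ w w' i]) (rule bound)
  ultimately show "weight a w < weight a w'"
    using weight_diff_after_common_prefix[of w n w' i a] prefix i w w'
    by (simp add: index_tuples_length)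
qed

section \<open>Boundary points and maximisers of the solution set\<close>

text \<open>Index version of P_Delta(c; A, Rt), see P_Delta_map.\<close>

definition max_below :: "nat \<Rightarrow> nat \<Rightarrow> (nat \<Rightarrow> nat \<Rightarrow> int) \<Rightarrow> int \<Rightarrow> nat list \<Rightarrow> bool" where
  "max_below n dl a c ks \<longleftrightarrow> ks \<in> index_tuples n dl \<and> weight a ks < c \<and>
     (\<forall>w\<in>index_tuples n dl. weight a w < c \<longrightarrow> w \<noteq> ks \<longrightarrow> weight a w < weight a ks)"

lemma first_difference:
  assumes "length w = length v" and "w \<noteq> v"
  obtains i where "i < length w" and "take i w = take i v" and "w ! i \<noteq> v ! i"
proof -
  have "\<exists>i. i < length w \<and> w ! i \<noteq> v ! i"
    using assms by (auto simp: list_eq_iff_nth_eq)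
  then obtain i where i: "i < length w" "w ! i \<noteq> v ! i"
    and least: "\<forall>k<i. \<not> (k < length w \<and> w ! k \<noteq> v ! k)"
    by (auto simp: exists_least_iff[of "\<lambda>i. i < length w \<and> w ! i \<noteq> v ! i"])
  have "take i w = take i v"
    using assms(1) i(1) least by (intro nth_equalityI) auto
  with i show thesis
    using that by blast
qed

lemma last_step_weight_le:
  assumes lex: "lex_dominant n dl a" and tr: "trend dl t (a j)" and last: "Suc j = n"
    and w: "w \<in> index_tuples n dl" and ks: "ks \<in> index_tuples n dl"
    and step: "ks[j := k'] \<in> index_tuples n dl" "k' = Suc (ks ! j) \<or> ks ! j = Suc k'"
    and up: "a j (ks ! j) < a j k'"
    and i: "i < n" "take i w = take i ks" and gt: "a i (ks ! i) < a i (w ! i)"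
  shows "weight a (ks[j := k']) \<le> weight a w"
proof (cases "i < j")
  case True
  then have "take i (ks[j := k']) = take i w" and "ks[j := k'] ! i = ks ! i"
    using i(2) by auto
  then show ?thesis
    using lex_dominantD[OF lex step(1) w i(1)] gt by simp
next
  case False
  then have ij: "i = j"
    using i(1) last by simp
  have len: "length w = n" "length ks = n"
    using w ks by (auto simp: index_tuples_length)
  have "w ! l = ks ! l" if "l < j" for l
    using i(2) ij that by (metis nth_take)
  then have "w = ks[j := w ! j]"
    using len last by (intro nth_equalityI) (auto simp: nth_list_update)
  then have "weight a w = weight a (ks[j := k']) - a j k' + a j (w ! j)"
    using weight_update[of j ks a "w ! j"] weight_update[of j ks a k'] len last by simp
  moreover have "a j k' \<le> a j (w ! j)"
  proof (rule trend_adjacent_le[OF tr])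
    show "dl \<le> ks ! j" "dl \<le> w ! j" "dl \<le> k'"
      using index_tuples_ge[OF ks, of j] index_tuples_ge[OF w, of j] index_tuples_ge[OF step(1), of j]
        last len by simp_all
  qed (use step(2) up gt ij in auto)
  ultimately show ?thesis
    by simp
qed

lemma max_below_if_last_step_reaches:
  assumes lex: "lex_dominant n dl a" and trends: "\<And>i. i < n \<Longrightarrow> \<exists>t\<noteq>0. trend dl t (a i)"
    and ks: "ks \<in> index_tuples n dl" "weight a ks < c" and last: "Suc j = n"
    and step: "ks[j := k'] \<in> index_tuples n dl" "k' = Suc (ks ! j) \<or> ks ! j = Suc k'"
    and up: "a j (ks ! j) < a j k'" and reach: "c \<le> weight a (ks[j := k'])"
  shows "max_below n dl a c ks"
  unfolding max_below_def
proof (intro conjI ballI impI ks)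
  fix w
  assume w: "w \<in> index_tuples n dl" and below: "weight a w < c" and "w \<noteq> ks"
  obtain i where i: "i < n" "take i w = take i ks" "w ! i \<noteq> ks ! i"
    using first_difference[of w ks] w ks(1) \<open>w \<noteq> ks\<close> by (auto simp: index_tuples_length)
  obtain t where "t \<noteq> 0" and tr: "trend dl t (a i)"
    using trends[OF i(1)] by blast
  have "a i (w ! i) \<noteq> a i (ks ! i)"
    using trend_inj[OF tr \<open>t \<noteq> 0\<close>] index_tuples_ge w ks(1) i by metis
  moreover have "\<not> a i (ks ! i) < a i (w ! i)"
  proof
    assume "a i (ks ! i) < a i (w ! i)"
    moreover obtain t' where "trend dl t' (a j)"
      using trends last by blast
    ultimately have "weight a (ks[j := k']) \<le> weight a w"
      using last_step_weight_le[OF lex _ last w ks(1) step up i(1,2)] by blast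
    with reach below show False
      by simp
  qed
  ultimately have "a i (w ! i) < a i (ks ! i)"
    by simp
  then show "weight a w < weight a ks"
    by (rule lex_dominantD[OF lex w ks(1) i(1,2)])
qed

definition feasible :: "nat \<Rightarrow> nat \<Rightarrow> nat option list \<Rightarrow> nat option list \<Rightarrow>
    (nat \<Rightarrow> nat \<Rightarrow> int) \<Rightarrow> (nat \<Rightarrow> nat \<Rightarrow> int) \<Rightarrow> int \<Rightarrow> int \<Rightarrow> nat list set" where
  "feasible n dl lo hi a b c1 c2 = {ks \<in> box_tuples n dl lo hi. weight a ks < c1 \<and> c2 < weight b ks}"

lemma feasible_update:
  assumes ks: "ks \<in> feasible n dl lo hi a b c1 c2" and box: "ks[j := k] \<in> box_tuples n dl lo hi"
    and j: "j < n" and "a j k \<le> a j (ks ! j)" and "b j (ks ! j) \<le> b j k"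
  shows "ks[j := k] \<in> feasible n dl lo hi a b c1 c2"
proof -
  have "length ks = n"
    using ks by (auto simp: feasible_def box_tuples_def index_tuples_length)
  then show ?thesis
    using assms weight_update[of j ks a k] weight_update[of j ks b k] by (auto simp: feasible_def)
qed

lemma feasible_decrement:
  assumes ks: "ks \<in> feasible n dl lo hi a b c1 c2" and box: "ks[j := ks ! j - 1] \<in> box_tuples n dl lo hi"
    and j: "j < n" and "trend dl ta (a j)" "0 \<le> ta" and "trend dl tb (b j)" "tb \<le> 0"
  shows "ks[j := ks ! j - 1] \<in> feasible n dl lo hi a b c1 c2"
proof -
  have "dl \<le> ks ! j - 1"
    using index_tuples_ge[of "ks[j := ks ! j - 1]" n dl j] box j ks
    by (auto simp: feasible_def box_tuples_def index_tuples_length)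
  then show ?thesis
    using feasible_update[OF ks box j] trend_mono[of dl ta "a j"] trend_antimono[of dl tb "b j"] assms(4-)
    by simp
qed

lemma feasible_increment:
  assumes ks: "ks \<in> feasible n dl lo hi a b c1 c2" and box: "ks[j := Suc (ks ! j)] \<in> box_tuples n dl lo hi"
    and j: "j < n" and "trend dl ta (a j)" "ta \<le> 0" and "trend dl tb (b j)" "0 \<le> tb"
  shows "ks[j := Suc (ks ! j)] \<in> feasible n dl lo hi a b c1 c2"
proof -
  have "dl \<le> ks ! j"
    using index_tuples_ge[of ks n dl j] j ks by (auto simp: feasible_def box_tuples_def)
  then show ?thesis
    using feasible_update[OF ks box j] trend_antimono[of dl ta "a j"] trend_mono[of dl tb "b j"] assms(4-)
    by simp
qed

lemma improving_step:
  assumes box: "ks \<in> box_tuples n dl lo hi" and free: "\<not> on_boundary n dl lo hi ks" and j: "j < n"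
    and tr: "trend dl t f" and "t \<noteq> 0"
  obtains k' where "ks[j := k'] \<in> box_tuples n dl lo hi" and "k' = Suc (ks ! j) \<or> ks ! j = Suc k'"
    and "f (ks ! j) < f k'"
proof (cases "0 < t")
  case True
  have "dl \<le> ks ! j"
    using box j by (auto simp: box_tuples_def index_tuples_ge)
  then show thesis
    using that box_tuples_increment[OF box j free] trend_strict_mono[OF tr True] by simp
next
  case False
  then have "t < 0"
    using \<open>t \<noteq> 0\<close> by simp
  have "ks[j := ks ! j - 1] \<in> box_tuples n dl lo hi" and "0 < ks ! j"
    using box_tuples_decrement[OF box j free] by simp_all
  moreover from this(1) have "dl \<le> ks ! j - 1"
    using j by (auto simp: box_tuples_def index_tuples_def dest: index_tuples_ge)
  ultimately show thesis
    using that trend_strict_antimono[OF tr \<open>t < 0\<close>, of "ks ! j - 1" "ks ! j"] by simp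
qed

lemma last_step_trichotomy:
  assumes trends: "\<And>i. i < n \<Longrightarrow> ta i \<noteq> 0 \<and> tb i \<noteq> 0 \<and> trend dl (ta i) (a i) \<and> trend dl (tb i) (b i)"
    and lex_a: "lex_dominant n dl a" and lex_b: "lex_dominant n dl (\<lambda>i k. - b i k)"
    and ks: "ks \<in> feasible n dl lo hi a b c1 c2" and last: "Suc j = n"
    and step: "ks[j := k'] \<in> box_tuples n dl lo hi" "k' = Suc (ks ! j) \<or> ks ! j = Suc k'"
    and up: "a j (ks ! j) < a j k'"
  shows "ks[j := k'] \<in> feasible n dl lo hi a b c1 c2 \<or>
    max_below n dl a c1 ks \<or> max_below n dl (\<lambda>i k. - b i k) (- c2) ks"
proof -
  have it: "ks \<in> index_tuples n dl" and it': "ks[j := k'] \<in> index_tuples n dl"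
    and below_a: "weight a ks < c1" and above_b: "c2 < weight b ks"
    using ks step(1) by (auto simp: feasible_def box_tuples_def)
  consider (reach_a) "c1 \<le> weight a (ks[j := k'])" | (reach_b) "weight b (ks[j := k']) \<le> c2"
    | (inside) "ks[j := k'] \<in> feasible n dl lo hi a b c1 c2"
    using step(1) by (force simp: feasible_def)
  then show ?thesis
  proof cases
    case reach_a
    then show ?thesis
      using trends max_below_if_last_step_reaches[OF lex_a _ it below_a last it' step(2) up] by blast
  next
    case reach_b
    have "\<exists>t\<noteq>0. trend dl t (\<lambda>k. - b i k)" if "i < n" for i
      using trends[OF that] trend_uminus[of dl "tb i" "b i"] neg_equal_0_iff_equal by blast
    moreover have "weight (\<lambda>i k. - b i k) ks < - c2" and "- c2 \<le> weight (\<lambda>i k. - b i k) (ks[j := k'])"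
      using above_b reach_b by (simp_all add: weight_uminus)
    moreover have "- b j (ks ! j) < - b j k'"
      using reach_b above_b weight_update[of j ks b k'] index_tuples_length[OF it] last by simp
    ultimately show ?thesis
      using max_below_if_last_step_reaches[OF lex_b _ it _ last it' step(2)] by blast
  qed simp
qed

lemma boundary_or_max_below_by_last_coordinate:
  assumes n: "0 < n"
    and trends: "\<And>i. i < n \<Longrightarrow> ta i \<noteq> 0 \<and> tb i \<noteq> 0 \<and> trend dl (ta i) (a i) \<and> trend dl (tb i) (b i)"
    and lex_a: "lex_dominant n dl a" and lex_b: "lex_dominant n dl (\<lambda>i k. - b i k)"
    and ks0: "ks0 \<in> feasible n dl lo hi a b c1 c2"
  shows "\<exists>ks\<in>feasible n dl lo hi a b c1 c2. on_boundary n dl lo hi ks \<or>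
    max_below n dl a c1 ks \<or> max_below n dl (\<lambda>i k. - b i k) (- c2) ks"
proof -
  let ?F = "feasible n dl lo hi a b c1 c2"
  obtain ks where ks: "ks \<in> ?F"
    and greatest: "\<And>ks'. ks' \<in> ?F \<Longrightarrow> nat (c1 - weight a ks) \<le> nat (c1 - weight a ks')"
    using ex_has_least_nat[of "\<lambda>ks. ks \<in> ?F" ks0 "\<lambda>ks. nat (c1 - weight a ks)"] ks0 by blast
  have box: "ks \<in> box_tuples n dl lo hi"
    using ks by (simp add: feasible_def)
  define j where "j = n - 1"
  have j: "j < n" "Suc j = n"
    using n by (auto simp: j_def)
  show ?thesis
  proof (cases "on_boundary n dl lo hi ks")
    case False
    obtain k' where step: "ks[j := k'] \<in> box_tuples n dl lo hi" "k' = Suc (ks ! j) \<or> ks ! j = Suc k'"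
      and up: "a j (ks ! j) < a j k'"
      using improving_step[OF box False j(1)] trends[OF j(1)] by blast
    have "ks[j := k'] \<notin> ?F"
    proof
      assume "ks[j := k'] \<in> ?F"
      then have "nat (c1 - weight a ks) \<le> nat (c1 - weight a (ks[j := k']))"
        by (rule greatest)
      moreover have "weight a ks < c1" and "length ks = n"
        using ks by (auto simp: feasible_def box_tuples_def index_tuples_length)
      ultimately show False
        using up weight_update[of j ks a k'] j by simp
    qed
    then show ?thesis
      using last_step_trichotomy[OF trends lex_a lex_b ks j(2) step up] ks by blast
  qed (use ks in blast)
qed

lemma sign_pattern_cases:
  fixes ta tb :: "nat \<Rightarrow> int"
  assumes signs: "\<forall>i<n. (ta i = -1 \<or> ta i = 0 \<or> ta i = 1) \<and> (tb i = -1 \<or> tb i = 0 \<or> tb i = 1)"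
  obtains (down) j where "j < n" and "0 \<le> ta j" and "tb j \<le> 0"
    | (up) j where "j < n" and "ta j \<le> 0" and "0 \<le> tb j" and "0 < j \<or> hi ! 0 \<noteq> None"
    | (exception) "hi ! 0 = None" and "ta 0 = 0 \<and> tb 0 = 1 \<or> ta 0 = -1 \<and> tb 0 = 0"
    | (strict) "\<forall>i<n. ta i \<noteq> 0 \<and> tb i \<noteq> 0"
proof (cases "\<forall>i<n. ta i \<noteq> 0 \<and> tb i \<noteq> 0")
  case False
  then obtain i where i: "i < n" "ta i = 0 \<or> tb i = 0"
    by blast
  show ?thesis
  proof (cases "0 \<le> ta i \<and> tb i \<le> 0")
    case True
    with i(1) down show ?thesis
      by blast
  next
    case False
    then have "ta i \<le> 0" "0 \<le> tb i" "ta i = 0 \<and> tb i = 1 \<or> ta i = -1 \<and> tb i = 0"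
      using i signs by auto
    then show ?thesis
      using up[OF i(1)] exception by (cases "0 < i") auto
  qed
qed (rule strict)

theorem feasible_boundary_or_max_below:
  assumes n: "0 < n"
    and trends: "\<forall>i<n. trend dl (ta i) (a i) \<and> trend dl (tb i) (b i)"
    and lex_a: "lex_dominant n dl a" and lex_b: "lex_dominant n dl (\<lambda>i k. - b i k)"
    and ks0: "ks0 \<in> feasible n dl lo hi a b c1 c2"
  shows "(hi ! 0 = None \<and> (ta 0 = 0 \<and> tb 0 = 1 \<or> ta 0 = -1 \<and> tb 0 = 0)) \<or>
    (\<exists>ks\<in>feasible n dl lo hi a b c1 c2. on_boundary n dl lo hi ks \<or>
       (\<forall>i<n. ta i \<noteq> 0 \<and> tb i \<noteq> 0) \<and>
       (max_below n dl a c1 ks \<or> max_below n dl (\<lambda>i k. - b i k) (- c2) ks))"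
proof -
  let ?F = "feasible n dl lo hi a b c1 c2"
  have F_box: "?F \<subseteq> box_tuples n dl lo hi"
    by (auto simp: feasible_def)
  have "\<forall>i<n. (ta i = -1 \<or> ta i = 0 \<or> ta i = 1) \<and> (tb i = -1 \<or> tb i = 0 \<or> tb i = 1)"
    using trends trend_values by blast
  then show ?thesis
  proof (cases rule: sign_pattern_cases[where hi = hi])
    case (down j)
    have "\<exists>ks\<in>?F. on_boundary n dl lo hi ks"
      using trends down
      by (intro boundary_reached_decreasing[OF ks0 F_box down(1)] feasible_decrement) auto
    then show ?thesis
      by blast
  next
    case (up j)
    have "\<exists>ks\<in>?F. on_boundary n dl lo hi ks"
      using trends up
      by (intro boundary_reached_increasing[OF ks0 F_box up(1,4)] feasible_increment) auto
    then show ?thesis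
      by blast
  next
    case exception
    then show ?thesis
      by blast
  next
    case strict
    then show ?thesis
      using boundary_or_max_below_by_last_coordinate[OF n _ lex_a lex_b ks0] trends by blast
  qed
qed

section \<open>Successors and operators\<close>

lemma
  assumes "infinite R"
  shows succR_in: "succR R z \<in> R" and succR_gt: "z < succR R z"
proof -
  have "\<exists>r. r \<in> R \<and> z < r"
    using assms finite_nat_set_iff_bounded_le[of R] by (meson not_le)
  then have "succR R z \<in> R \<and> z < succR R z"
    unfolding succR_def by (rule LeastI_ex)
  then show "succR R z \<in> R" and "z < succR R z"
    by simp_all
qed

lemma succR_le: "r \<in> R \<Longrightarrow> z < r \<Longrightarrow> succR R z \<le> r"
  unfolding succR_def by (rule Least_le) simp

lemma succR_mono:
  assumes "infinite R" and "z \<le> z'"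
  shows "succR R z \<le> succR R z'"
  using succR_le[OF succR_in[OF assms(1)], of z] succR_gt[OF assms(1), of z'] assms(2) by simp

lemma funpow_succR_in: "infinite R \<Longrightarrow> z \<in> R \<Longrightarrow> (succR R ^^ k) z \<in> R"
  by (induction k) (auto simp: succR_in)

lemma funpow_succR_ge: "infinite R \<Longrightarrow> z + k \<le> (succR R ^^ k) z"
proof (induction k)
  case (Suc k)
  then show ?case
    using succR_gt[OF Suc.prems, of "(succR R ^^ k) z"] by simp
qed simp

lemma funpow_succR_mono: "infinite R \<Longrightarrow> z \<le> z' \<Longrightarrow> (succR R ^^ k) z \<le> (succR R ^^ k) z'"
  by (induction k) (auto intro: succR_mono)

lemma funpow_succR_mono_exp:
  assumes "infinite R" and "k \<le> k'"
  shows "(succR R ^^ k) z \<le> (succR R ^^ k') z"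
proof -
  have "(succR R ^^ k') z = (succR R ^^ (k' - k + k)) z"
    using assms(2) by simp
  also have "\<dots> = (succR R ^^ (k' - k)) ((succR R ^^ k) z)"
    by (simp add: funpow_add)
  finally show ?thesis
    using funpow_succR_ge[OF assms(1), of "(succR R ^^ k) z" "k' - k"] by simp
qed

lemma enumR_add: "enumR R (k + j) = (succR R ^^ j) (enumR R k)"
  unfolding enumR_def by (simp add: funpow_add add.commute)

lemma enumR_in:
  assumes "infinite R"
  shows "enumR R k \<in> R"
proof -
  have "(LEAST r. r \<in> R) \<in> R"
    using assms by (metis LeastI_ex finite.emptyI ex_in_conv)
  then show ?thesis
    unfolding enumR_def using funpow_succR_in[OF assms] by blast
qed

lemma op_app_Cons_0: "op_app R (0 # C) t = op_app R C (succR R t)"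
proof -
  have "op_app R (0 # C) t = (\<Sum>i<Suc (length C). (0 # C) ! i * int ((succR R ^^ i) t))"
    by (simp add: op_app_def)
  also have "\<dots> = (\<Sum>i<length C. C ! i * int ((succR R ^^ Suc i) t))"
    by (subst sum.lessThan_Suc_shift) simp
  finally show ?thesis
    by (simp add: op_app_def funpow_Suc_right del: funpow.simps)
qed

lemma op_app_replicate_0: "op_app R (replicate k 0 @ C) t = op_app R C ((succR R ^^ k) t)"
  by (induction k arbitrary: t) (simp_all add: op_app_Cons_0 funpow_Suc_right del: funpow.simps)

lemma op_app_scale: "op_app R (map (\<lambda>x. g * x) C) t = g * op_app R C t"
  by (simp add: op_app_def sum_distrib_left mult.assoc)

lemma op_app_uminus: "op_app R (map uminus C) t = - op_app R C t"
  by (simp add: op_app_def sum_negf)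

definition op_coeff :: "operator \<Rightarrow> nat \<Rightarrow> int" where
  "op_coeff C j = (if j < length C then C ! j else 0)"

lemma op_app_eq_sum_coeff:
  assumes "length C \<le> L"
  shows "op_app R C t = (\<Sum>j<L. op_coeff C j * int ((succR R ^^ j) t))"
proof -
  have "op_app R C t = (\<Sum>j<length C. op_coeff C j * int ((succR R ^^ j) t))"
    by (simp add: op_app_def op_coeff_def)
  also have "\<dots> = (\<Sum>j<L. op_coeff C j * int ((succR R ^^ j) t))"
    by (rule sum.mono_neutral_left) (use assms in \<open>auto simp: op_coeff_def\<close>)
  finally show ?thesis .
qed

definition op_sub :: "operator \<Rightarrow> operator \<Rightarrow> operator" where
  "op_sub P Q = map (\<lambda>j. op_coeff P j - op_coeff Q j) [0..<max (length P) (length Q)]"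

lemma op_app_op_sub: "op_app R (op_sub P Q) t = op_app R P t - op_app R Q t"
proof -
  let ?L = "max (length P) (length Q)"
  have "op_app R (op_sub P Q) t = (\<Sum>j<?L. (op_coeff P j - op_coeff Q j) * int ((succR R ^^ j) t))"
    by (simp add: op_sub_def op_app_def)
  also have "\<dots> = op_app R P t - op_app R Q t"
    by (simp add: op_app_eq_sum_coeff[of P ?L] op_app_eq_sum_coeff[of Q ?L]
        left_diff_distrib sum_subtractf)
  finally show ?thesis .
qed

definition op_diff :: "nat \<Rightarrow> operator \<Rightarrow> operator" where
  "op_diff d C = op_sub (replicate d 0 @ C) C"

lemma op_app_op_diff: "op_app R (op_diff d C) t = op_app R C ((succR R ^^ d) t) - op_app R C t"
  by (simp add: op_diff_def op_app_op_sub op_app_replicate_0)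

lemma op_app_abs_le:
  assumes "infinite R" and "length C \<le> c"
  shows "\<bar>op_app R C t\<bar> \<le> sum_list (map abs C) * int ((succR R ^^ c) t)"
proof -
  have "\<bar>op_app R C t\<bar> \<le> (\<Sum>j<length C. \<bar>C ! j * int ((succR R ^^ j) t)\<bar>)"
    unfolding op_app_def by (rule sum_abs)
  also have "\<dots> \<le> (\<Sum>j<length C. \<bar>C ! j\<bar> * int ((succR R ^^ c) t))"
  proof (rule sum_mono)
    fix j
    assume "j \<in> {..<length C}"
    then have "(succR R ^^ j) t \<le> (succR R ^^ c) t"
      using funpow_succR_mono_exp[OF assms(1)] assms(2) by simp
    then show "\<bar>C ! j * int ((succR R ^^ j) t)\<bar> \<le> \<bar>C ! j\<bar> * int ((succR R ^^ c) t)"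
      by (simp add: abs_mult mult_left_mono)
  qed
  also have "\<dots> = sum_list (map abs C) * int ((succR R ^^ c) t)"
    by (simp add: sum_list_sum_nth atLeast0LessThan sum_distrib_right)
  finally show ?thesis .
qed

section \<open>Growth of operators on a sparse set\<close>

lemma sparse_infinite: "sparse R \<Longrightarrow> infinite R"
  by (simp add: sparse_def)

lemma sparse_trichotomy: "sparse R \<Longrightarrow> op_eq0 R C \<or> op_pos R C \<or> op_neg R C"
  by (simp add: sparse_def)

lemma sparse_op_pos_exceeds:
  "sparse R \<Longrightarrow> op_pos R C \<Longrightarrow> \<exists>E. \<forall>z\<in>R. int z < op_app R C ((succR R ^^ E) z)"
  by (simp add: sparse_def)

definition op_sign :: "nat set \<Rightarrow> operator \<Rightarrow> int" where
  "op_sign R C = (if op_eq0 R C then 0 else if op_pos R C then 1 else -1)"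

lemma op_pos_scale_op_sign:
  assumes "sparse R" and "\<not> op_eq0 R C"
  shows "op_pos R (map (\<lambda>x. op_sign R C * x) C)"
proof (cases "op_pos R C")
  case True
  then show ?thesis
    using assms(2) by (simp add: op_pos_def op_app_scale op_sign_def)
next
  case False
  then have "op_neg R C"
    using sparse_trichotomy[OF assms(1)] assms(2) by blast
  then show ?thesis
    using False assms(2) by (simp add: op_pos_def op_neg_def op_app_uminus op_sign_def)
qed

text \<open>By (S2) for the positive operator sigma - 1, the successor iterate sigma^(E+1) at least doubles.\<close>

lemma sparse_funpow_ge_mult:
  assumes "sparse R"
  shows "\<exists>J. \<forall>z\<in>R. K * z \<le> (succR R ^^ J) z"
proof -
  have inf: "infinite R"
    using assms by (rule sparse_infinite)
  have gap: "op_app R [-1, 1] z = int (succR R z) - int z" for z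
    by (simp add: op_app_def numeral_2_eq_2 lessThan_Suc)
  have "op_pos R [-1, 1]"
    unfolding op_pos_def gap using succR_gt[OF inf] by simp
  then obtain E where E: "\<And>z. z \<in> R \<Longrightarrow> int z < op_app R [-1, 1] ((succR R ^^ E) z)"
    using sparse_op_pos_exceeds[OF assms] by blast
  have double: "2 * z \<le> (succR R ^^ Suc E) z" if "z \<in> R" for z
    using E[OF that] funpow_succR_ge[OF inf, of z E] by (simp add: gap)
  have "2 ^ k * z \<le> (succR R ^^ (Suc E * k)) z" if "z \<in> R" for k z
  proof (induction k)
    case (Suc k)
    have "2 * (succR R ^^ (Suc E * k)) z \<le> (succR R ^^ Suc E) ((succR R ^^ (Suc E * k)) z)"
      using double funpow_succR_in[OF inf that] by blast
    then show ?case
      using Suc by (simp add: funpow_add)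
  qed simp
  moreover have "K * z \<le> 2 ^ K * z" for z
    by simp
  ultimately have "\<forall>z\<in>R. K * z \<le> (succR R ^^ (Suc E * K)) z"
    using order_trans by blast
  then show ?thesis
    by blast
qed

lemma op_app_antimono_along_orbit:
  assumes inf: "infinite R" and t: "t \<in> R"
    and nonpos: "\<And>z. z \<in> R \<Longrightarrow> t \<le> z \<Longrightarrow> op_app R (op_diff d P) z \<le> 0"
  shows "op_app R P ((succR R ^^ (d * m)) t) \<le> op_app R P t"
proof (induction m)
  case (Suc m)
  let ?s = "(succR R ^^ (d * m)) t"
  have "op_app R (op_diff d P) ?s \<le> 0"
    using nonpos funpow_succR_in[OF inf t] funpow_succR_ge[OF inf, of t] le_add1 order_trans by blast
  then have "op_app R P ((succR R ^^ d) ?s) \<le> op_app R P ?s"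
    by (simp add: op_app_op_diff)
  then show ?case
    using Suc by (simp add: funpow_add mult.commute)
qed simp

lemma op_pos_exceeds_along_orbit:
  assumes sp: "sparse R" and d: "0 < d" and P: "op_pos R P" and t: "t \<in> R"
  shows "\<exists>m. op_app R P t < op_app R P ((succR R ^^ (d * m)) t)"
proof -
  have inf: "infinite R"
    using sp by (rule sparse_infinite)
  obtain E where E: "\<And>z. z \<in> R \<Longrightarrow> int z < op_app R P ((succR R ^^ E) z)"
    using sparse_op_pos_exceeds[OF sp P] by blast
  define m where "m = E + nat (op_app R P t) + 1"
  have "m \<le> d * m"
    using d by simp
  then have "E \<le> d * m" and "nat (op_app R P t) + 1 \<le> d * m - E"
    by (simp_all add: m_def)
  have "(succR R ^^ (d * m)) t = (succR R ^^ (E + (d * m - E))) t"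
    using \<open>E \<le> d * m\<close> by simp
  then have split: "(succR R ^^ (d * m)) t = (succR R ^^ E) ((succR R ^^ (d * m - E)) t)"
    by (simp add: funpow_add)
  have "op_app R P t < int (d * m - E)"
    using \<open>nat (op_app R P t) + 1 \<le> d * m - E\<close> by linarith
  also have "\<dots> \<le> int ((succR R ^^ (d * m - E)) t)"
    using funpow_succR_ge[OF inf, of t "d * m - E"] by simp
  also have "\<dots> < op_app R P ((succR R ^^ (d * m)) t)"
    using E[OF funpow_succR_in[OF inf t]] split by simp
  finally show ?thesis
    by blast
qed

text \<open>If sigma^d P - P were not >_R 0, by (S1) it would be nonpositive on a tail of R, so P would
  not increase along d-orbits, contradicting (S2) via op_pos_exceeds_along_orbit.\<close>

lemma op_pos_op_diff:
  assumes sp: "sparse R" and d: "0 < d" and P: "op_pos R P"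
  shows "op_pos R (op_diff d P)"
proof (rule ccontr)
  assume "\<not> op_pos R (op_diff d P)"
  have inf: "infinite R"
    using sp by (rule sparse_infinite)
  have "op_eq0 R (op_diff d P) \<or> op_neg R (op_diff d P)"
    using sparse_trichotomy[OF sp, of "op_diff d P"] \<open>\<not> op_pos R (op_diff d P)\<close> by blast
  then have "finite {z\<in>R. 0 < op_app R (op_diff d P) z}"
  proof
    assume "op_eq0 R (op_diff d P)"
    then have "{z\<in>R. 0 < op_app R (op_diff d P) z} = {}"
      by (auto simp: op_eq0_def)
    then show ?thesis
      by (metis finite.emptyI)
  next
    assume "op_neg R (op_diff d P)"
    then show ?thesis
      unfolding op_neg_def by (rule rev_finite_subset) auto
  qed
  then obtain k where k: "\<forall>z\<in>{z\<in>R. 0 < op_app R (op_diff d P) z}. z \<le> k"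
    unfolding finite_nat_set_iff_bounded_le by blast
  obtain t where t: "t \<in> R" "k < t"
    using inf finite_nat_set_iff_bounded_le[of R] by (meson not_le)
  have "op_app R P ((succR R ^^ (d * m)) t) \<le> op_app R P t" for m
    using k t by (intro op_app_antimono_along_orbit[OF inf t(1)]) (auto simp: not_less)
  then show False
    using op_pos_exceeds_along_orbit[OF sp d P t(1)] by (meson not_less)
qed

lemma op_pos_eventually_exceeds:
  assumes sp: "sparse R" and P: "op_pos R P"
  shows "\<forall>\<^sub>F D in sequentially. \<forall>y\<in>R. int K * int ((succR R ^^ c) y) < op_app R P ((succR R ^^ D) y)"
proof -
  have inf: "infinite R"
    using sp by (rule sparse_infinite)
  obtain E where E: "\<And>z. z \<in> R \<Longrightarrow> int z < op_app R P ((succR R ^^ E) z)"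
    using sparse_op_pos_exceeds[OF sp P] by blast
  obtain J where J: "\<forall>z\<in>R. K * z \<le> (succR R ^^ J) z"
    using sparse_funpow_ge_mult[OF sp] by blast
  have "\<forall>y\<in>R. int K * int ((succR R ^^ c) y) < op_app R P ((succR R ^^ D) y)"
    if D: "E + J + c \<le> D" for D
  proof
    fix y
    assume y: "y \<in> R"
    have "K * (succR R ^^ c) y \<le> (succR R ^^ J) ((succR R ^^ c) y)"
      using J funpow_succR_in[OF inf y] by blast
    also have "\<dots> = (succR R ^^ (J + c)) y"
      by (simp add: funpow_add)
    also have "\<dots> \<le> (succR R ^^ (D - E)) y"
      using funpow_succR_mono_exp[OF inf] D by simp
    finally have "int K * int ((succR R ^^ c) y) \<le> int ((succR R ^^ (D - E)) y)"
      by (metis of_nat_le_iff of_nat_mult)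
    also have "\<dots> < op_app R P ((succR R ^^ E) ((succR R ^^ (D - E)) y))"
      using E funpow_succR_in[OF inf y] by blast
    also have "(succR R ^^ E) ((succR R ^^ (D - E)) y) = (succR R ^^ D) y"
      using funpow_add[of E "D - E" "succR R"] D by simp
    finally show "int K * int ((succR R ^^ c) y) < op_app R P ((succR R ^^ D) y)" .
  qed
  then show ?thesis
    unfolding eventually_sequentially by blast
qed

lemma op_steps_eventually_dominate:
  assumes sp: "sparse R" and d: "0 < d" and C: "\<not> op_eq0 R C"
  shows "\<forall>\<^sub>F D in sequentially. \<forall>y\<in>R. int K * int ((succR R ^^ c) y) <
    op_sign R C * (op_app R C ((succR R ^^ d) ((succR R ^^ D) y)) - op_app R C ((succR R ^^ D) y))"
proof -
  let ?P = "op_diff d (map (\<lambda>x. op_sign R C * x) C)"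
  have "op_pos R ?P"
    using op_pos_op_diff[OF sp d op_pos_scale_op_sign[OF sp C]] .
  moreover have "op_app R ?P t = op_sign R C * (op_app R C ((succR R ^^ d) t) - op_app R C t)" for t
    by (simp add: op_app_op_diff op_app_scale right_diff_distrib)
  ultimately show ?thesis
    using op_pos_eventually_exceeds[OF sp, of ?P K c] by simp
qed

lemma op_steps_dominate_along_enumeration:
  assumes sp: "sparse R" and d: "0 < d" and C: "\<not> op_eq0 R C"
    and e: "\<And>k. e k \<in> R" "\<And>j k. (succR R ^^ (d * j)) (e k) = e (k + j)"
  shows "\<forall>\<^sub>F dl in sequentially. \<forall>k\<ge>dl. int K * int ((succR R ^^ c) (e (Suc k - dl))) <
    op_sign R C * (op_app R C (e (Suc k)) - op_app R C (e k))"
proof -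
  obtain D0 where D0: "\<And>D y. D0 \<le> D \<Longrightarrow> y \<in> R \<Longrightarrow> int K * int ((succR R ^^ c) y) <
      op_sign R C * (op_app R C ((succR R ^^ d) ((succR R ^^ D) y)) - op_app R C ((succR R ^^ D) y))"
    using op_steps_eventually_dominate[OF sp d C, of K c] unfolding eventually_sequentially by blast
  have "\<forall>k\<ge>dl. int K * int ((succR R ^^ c) (e (Suc k - dl))) <
      op_sign R C * (op_app R C (e (Suc k)) - op_app R C (e k))" if dl: "Suc D0 \<le> dl" for dl
  proof (intro allI impI)
    fix k
    assume "dl \<le> k"
    have "dl - 1 \<le> d * (dl - 1)"
      using d by simp
    then have "D0 \<le> d * (dl - 1)"
      using dl by linarith
    moreover have "(succR R ^^ (d * (dl - 1))) (e (Suc k - dl)) = e k"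
      using e(2) \<open>dl \<le> k\<close> dl by simp
    moreover have "(succR R ^^ d) (e k) = e (Suc k)"
      using e(2)[of 1 k] by simp
    ultimately show "int K * int ((succR R ^^ c) (e (Suc k - dl))) <
        op_sign R C * (op_app R C (e (Suc k)) - op_app R C (e k))"
      using D0[of "d * (dl - 1)" "e (Suc k - dl)"] e(1) by simp
  qed
  then show ?thesis
    unfolding eventually_sequentially by blast
qed

lemma uniform_op_bound:
  assumes inf: "infinite R"
  obtains W c where "0 \<le> W"
    and "\<And>C t. C \<in> set Cs \<Longrightarrow> \<bar>op_app R C t\<bar> \<le> W * int ((succR R ^^ c) t)"
proof
  have abs_sum_nonneg: "0 \<le> sum_list (map abs C)" for C :: operator
    by (rule sum_list_nonneg) auto
  show "0 \<le> sum_list (map (\<lambda>C. sum_list (map abs C)) Cs)"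
    by (intro sum_list_nonneg) (auto simp: abs_sum_nonneg)
  fix C t
  assume C: "C \<in> set Cs"
  have "length C \<le> sum_list (map length Cs)"
    using C by (intro member_le_sum_list) auto
  moreover have "sum_list (map abs C) \<le> sum_list (map (\<lambda>C. sum_list (map abs C)) Cs)"
    using C by (intro member_le_sum_list) (auto simp: abs_sum_nonneg)
  ultimately show "\<bar>op_app R C t\<bar> \<le>
      sum_list (map (\<lambda>C. sum_list (map abs C)) Cs) * int ((succR R ^^ sum_list (map length Cs)) t)"
    using op_app_abs_le[OF inf, of C "sum_list (map length Cs)" t] by (simp add: order_trans mult_right_mono)
qed

lemma trend_op_sign_if_steps_dominate:
  assumes e: "\<And>k. e k \<in> R" and m: "\<And>k. 0 \<le> m k"
    and steps: "\<not> op_eq0 R C \<Longrightarrow>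
      \<forall>k\<ge>dl. m k < op_sign R C * (op_app R C (e (Suc k)) - op_app R C (e k))"
  shows "trend dl (op_sign R C) (\<lambda>k. op_app R C (e k))"
proof (cases "op_eq0 R C")
  case True
  then show ?thesis
    using e by (simp add: trend_def op_sign_def op_eq0_def)
next
  case False
  show ?thesis
  proof (rule trend_if_steps_positive)
    show "op_sign R C = -1 \<or> op_sign R C = 1"
      using False by (simp add: op_sign_def)
    show "0 < op_sign R C * (op_app R C (e (Suc k)) - op_app R C (e k))" if "dl \<le> k" for k
      using steps[OF False] m[of k] that by force
  qed
qed

lemma zero_or_signed_steps:
  assumes e: "\<And>k. e k \<in> R" and s: "s = -1 \<or> s = 1"
    and steps: "\<not> op_eq0 R C \<Longrightarrow>
      \<forall>k\<ge>dl. m k < op_sign R C * (op_app R C (e (Suc k)) - op_app R C (e k))"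
  shows "(\<forall>k. s * op_app R C (e k) = 0) \<or>
    (\<exists>t\<in>{-1, 1}. \<forall>k\<ge>dl. m k < t * (s * op_app R C (e (Suc k)) - s * op_app R C (e k)))"
proof (cases "op_eq0 R C")
  case True
  then show ?thesis
    using e by (simp add: op_eq0_def)
next
  case False
  show ?thesis
  proof (intro disjI2 bexI[of _ "s * op_sign R C"] allI impI)
    show "s * op_sign R C \<in> {-1, 1}"
      using s False by (auto simp: op_sign_def)
    fix k
    assume "dl \<le> k"
    then have "m k < op_sign R C * (op_app R C (e (Suc k)) - op_app R C (e k))"
      using steps[OF False] by blast
    also have "\<dots> = s * op_sign R C * (s * op_app R C (e (Suc k)) - s * op_app R C (e k))"
      using s by (auto simp: algebra_simps)
    finally show "m k < s * op_sign R C * (s * op_app R C (e (Suc k)) - s * op_app R C (e k))" .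
  qed
qed

lemma trend_and_lex_dominant_if_steps_dominate:
  assumes e: "\<And>k. e k \<in> R" and len: "length A = n" "length B = n"
    and "mono bnd" and bound: "\<And>C k. C \<in> set (A @ B) \<Longrightarrow> \<bar>op_app R C (e k)\<bar> \<le> bnd k"
    and steps: "\<forall>C\<in>set (A @ B). \<not> op_eq0 R C \<longrightarrow> (\<forall>k\<ge>dl.
      2 * int n * bnd (Suc k - dl) < op_sign R C * (op_app R C (e (Suc k)) - op_app R C (e k)))"
  shows "(\<forall>i<n. trend dl (op_sign R (A ! i)) (\<lambda>k. op_app R (A ! i) (e k)) \<and>
           trend dl (op_sign R (B ! i)) (\<lambda>k. op_app R (B ! i) (e k))) \<and>
    lex_dominant n dl (\<lambda>i k. op_app R (A ! i) (e k)) \<and>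
    lex_dominant n dl (\<lambda>i k. - op_app R (B ! i) (e k))"
proof -
  have C_in: "A ! i \<in> set (A @ B)" "B ! i \<in> set (A @ B)" if "i < n" for i
    using that len by auto
  have zero_or_steps: "(\<forall>k. s * op_app R C (e k) = 0) \<or> (\<exists>t\<in>{-1, 1}. \<forall>k\<ge>dl.
      2 * int n * bnd (Suc k - dl) < t * (s * op_app R C (e (Suc k)) - s * op_app R C (e k)))"
    if "C \<in> set (A @ B)" and "s = -1 \<or> s = 1" for C s
    using that steps by (intro zero_or_signed_steps[where e = e, OF e]) auto
  have "lex_dominant n dl (\<lambda>i k. op_app R (A ! i) (e k))"
  proof (rule lex_dominant_if_steps_dominate[OF \<open>mono bnd\<close>])
    show "\<bar>op_app R (A ! i) (e k)\<bar> \<le> bnd k" if "i < n" for i k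
      using bound[OF C_in(1)[OF that]] .
    show "(\<forall>k. op_app R (A ! i) (e k) = 0) \<or> (\<exists>t\<in>{-1, 1}. \<forall>k\<ge>dl.
        2 * int n * bnd (Suc k - dl) < t * (op_app R (A ! i) (e (Suc k)) - op_app R (A ! i) (e k)))"
      if "i < n" for i
      using zero_or_steps[OF C_in(1)[OF that], of 1] by simp
  qed
  moreover have "lex_dominant n dl (\<lambda>i k. - op_app R (B ! i) (e k))"
  proof (rule lex_dominant_if_steps_dominate[OF \<open>mono bnd\<close>])
    show "\<bar>- op_app R (B ! i) (e k)\<bar> \<le> bnd k" if "i < n" for i k
      using bound[OF C_in(2)[OF that]] by simp
    show "(\<forall>k. - op_app R (B ! i) (e k) = 0) \<or> (\<exists>t\<in>{-1, 1}. \<forall>k\<ge>dl.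
        2 * int n * bnd (Suc k - dl) < t * (- op_app R (B ! i) (e (Suc k)) - - op_app R (B ! i) (e k)))"
      if "i < n" for i
      using zero_or_steps[OF C_in(2)[OF that], of "-1"] by simp
  qed
  moreover have "trend dl (op_sign R C) (\<lambda>k. op_app R C (e k))" if "C \<in> set (A @ B)" for C
  proof (rule trend_op_sign_if_steps_dominate[where m = "\<lambda>k. 2 * int n * bnd (Suc k - dl)", OF e])
    show "0 \<le> 2 * int n * bnd (Suc k - dl)" for k
      using bound[OF that, of "Suc k - dl"] by simp
  qed (use steps that in auto)
  ultimately show ?thesis
    using C_in by blast
qed

lemma eventually_trend_and_lex_dominant:
  assumes sp: "sparse R" and d: "0 < d" and len: "length A = n" "length B = n"
    and e: "strict_mono e" "\<And>k. e k \<in> R" "\<And>j k. (succR R ^^ (d * j)) (e k) = e (k + j)"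
  shows "\<forall>\<^sub>F dl in sequentially.
    (\<forall>i<n. trend dl (op_sign R (A ! i)) (\<lambda>k. op_app R (A ! i) (e k)) \<and>
           trend dl (op_sign R (B ! i)) (\<lambda>k. op_app R (B ! i) (e k))) \<and>
    lex_dominant n dl (\<lambda>i k. op_app R (A ! i) (e k)) \<and>
    lex_dominant n dl (\<lambda>i k. - op_app R (B ! i) (e k))"
proof -
  have inf: "infinite R"
    using sp by (rule sparse_infinite)
  obtain W c where W: "0 \<le> W"
    and bound: "\<And>C t. C \<in> set (A @ B) \<Longrightarrow> \<bar>op_app R C t\<bar> \<le> W * int ((succR R ^^ c) t)"
    using uniform_op_bound[OF inf] by blast
  define bnd where "bnd k = W * int ((succR R ^^ c) (e k))" for k
  have "mono bnd"
  proof (rule monoI)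
    fix k k' :: nat
    assume "k \<le> k'"
    then have "(succR R ^^ c) (e k) \<le> (succR R ^^ c) (e k')"
      using funpow_succR_mono[OF inf] e(1) by (simp add: strict_mono_less_eq)
    then show "bnd k \<le> bnd k'"
      using W by (simp add: bnd_def mult_left_mono)
  qed
  have "\<forall>C\<in>set (A @ B). \<forall>\<^sub>F dl in sequentially. \<not> op_eq0 R C \<longrightarrow> (\<forall>k\<ge>dl.
      2 * int n * bnd (Suc k - dl) < op_sign R C * (op_app R C (e (Suc k)) - op_app R C (e k)))"
  proof
    fix C
    have "int (nat (2 * int n * W)) = 2 * int n * W"
      using W by simp
    then show "\<forall>\<^sub>F dl in sequentially. \<not> op_eq0 R C \<longrightarrow> (\<forall>k\<ge>dl.
        2 * int n * bnd (Suc k - dl) < op_sign R C * (op_app R C (e (Suc k)) - op_app R C (e k)))"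
      using op_steps_dominate_along_enumeration[OF sp d _ e(2,3), of C "nat (2 * int n * W)" c]
      by (cases "op_eq0 R C") (simp_all add: bnd_def mult.assoc)
  qed
  then have "\<forall>\<^sub>F dl in sequentially. \<forall>C\<in>set (A @ B). \<not> op_eq0 R C \<longrightarrow> (\<forall>k\<ge>dl.
      2 * int n * bnd (Suc k - dl) < op_sign R C * (op_app R C (e (Suc k)) - op_app R C (e k)))"
    by (rule eventually_ball_finite[rotated]) simp
  then show ?thesis
    by (rule eventually_mono)
      (use trend_and_lex_dominant_if_steps_dominate[OF e(2) len \<open>mono bnd\<close>] bound in
        \<open>simp add: bnd_def\<close>)
qed

section \<open>Transfer to tuples over Rt\<close>

lemma sub_d_enumeration:
  assumes inf: "infinite R" and d: "0 < d" and "sub_d Rt d R"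
  obtains e where "Rt = range e" and "strict_mono e" and "\<And>k. e k \<in> R"
    and "\<And>j k. (succR R ^^ (d * j)) (e k) = e (k + j)"
proof -
  obtain N where N: "Rt = {enumR R (N + d * t) | t. True}"
    using assms(3) by (auto simp: sub_d_def)
  define e where "e t = enumR R (N + d * t)" for t
  have shift: "(succR R ^^ (d * j)) (e k) = e (k + j)" for j k
    unfolding e_def by (metis enumR_add add.assoc distrib_left)
  have "e k < e (Suc k)" for k
    using shift[of 1 k] funpow_succR_ge[OF inf, of "e k" d] d by simp
  then have "strict_mono e"
    by (rule strict_mono_Suc_iff[THEN iffD2, rule_format])
  moreover have "Rt = range e"
    using N by (auto simp: e_def)
  moreover have "e k \<in> R" for k
    using enumR_in[OF inf] by (simp add: e_def)
  ultimately show thesis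
    using that shift by blast
qed

lemma znext_map:
  assumes "Rt = range e" and "strict_mono e" and "i < length ks"
  shows "znext Rt (map e ks) i = e (next_entry ks i)"
proof -
  have "(LEAST r. r \<in> Rt) = e 0"
    using assms(1,2) by (auto intro!: Least_equality simp: strict_mono_less_eq)
  then show ?thesis
    using assms(3) by (simp add: znext_def next_entry_def)
qed

lemma tuples_eq_image:
  assumes Rt: "Rt = range e" and e: "strict_mono e" and shift: "\<And>t. (succR R ^^ D) (e t) = e (t + dl)"
  shows "tuples R Rt n D = map e ` index_tuples n dl"
proof -
  have iff: "map e ks \<in> tuples R Rt n D \<longleftrightarrow> ks \<in> index_tuples n dl" for ks
  proof -
    have "(succR R ^^ D) (znext Rt (map e ks) i) \<le> map e ks ! i \<longleftrightarrow> next_entry ks i + dl \<le> ks ! i"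
      if "i < length ks" for i
      using znext_map[OF Rt e that] shift that by (simp add: strict_mono_less_eq[OF e])
    then show ?thesis
      using Rt by (auto simp: tuples_def index_tuples_def)
  qed
  show ?thesis
  proof (intro equalityI subsetI)
    fix z
    assume z: "z \<in> tuples R Rt n D"
    then have "z = map e (map (inv e) z)"
      using Rt by (auto simp: tuples_def f_inv_into_f intro!: map_idI[symmetric])
    then show "z \<in> map e ` index_tuples n dl"
      using iff z by (metis image_eqI)
  qed (use iff in auto)
qed

lemma lower_ok_map_iff: "strict_mono e \<Longrightarrow> lower_ok (map_option e u) (e k) \<longleftrightarrow> lower_ok u k"
  by (cases u) (simp_all add: lower_ok_def strict_mono_less_eq)

lemma upper_ok_map_iff: "strict_mono e \<Longrightarrow> upper_ok (map_option e v) (e k) \<longleftrightarrow> upper_ok v k"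
  by (cases v) (simp_all add: upper_ok_def strict_mono_less_eq)

lemma options_in_range_eq_map:
  assumes "\<forall>i<length u. \<forall>a. u ! i = Some a \<longrightarrow> a \<in> range e"
  shows "u = map (map_option e) (map (map_option (inv e)) u)"
proof (rule nth_equalityI)
  fix i
  assume "i < length u"
  then show "u ! i = map (map_option e) (map (map_option (inv e)) u) ! i"
    using assms by (cases "u ! i") (auto simp: f_inv_into_f)
qed simp

lemma dotR_map: "dotR R Cs (map e ks) = weight (\<lambda>i k. op_app R (Cs ! i) (e k)) ks"
  by (simp add: dotR_def weight_def)

lemma dagger_map_iff:
  assumes "strict_mono e" and "length lo = length ks" and "length hi = length ks"
  shows "dagger R A B x y1 y2 (map (map_option e) lo) (map (map_option e) hi) (map e ks) \<longleftrightarrow>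
    weight (\<lambda>i k. op_app R (A ! i) (e k)) ks < x - y1 \<and>
    x - y2 < weight (\<lambda>i k. op_app R (B ! i) (e k)) ks \<and> in_box lo hi ks"
  using assms lower_ok_map_iff[OF assms(1)] upper_ok_map_iff[OF assms(1)]
  by (auto simp: dagger_def in_box_def dotR_map)

lemma on_boundary_map:
  assumes Rt: "Rt = range e" and e: "strict_mono e" and shift: "\<And>t. (succR R ^^ D) (e t) = e (t + dl)"
    and len: "length ks = n" "length lo = n" "length hi = n"
    and "on_boundary n dl lo hi ks"
  shows "(\<exists>i<n. map e ks ! i = (succR R ^^ D) (znext Rt (map e ks) i)) \<or>
    (\<exists>i<n. map (map_option e) lo ! i = Some (map e ks ! i) \<or>
           map (map_option e) hi ! i = Some (map e ks ! i))"
  using assms(7) znext_map[OF Rt e] shift len strict_mono_eq[OF e]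
  by (auto simp: on_boundary_def)

lemma P_Delta_map:
  assumes Rt: "Rt = range e" and e: "strict_mono e" and shift: "\<And>t. (succR R ^^ D) (e t) = e (t + dl)"
    and max: "max_below n dl (\<lambda>i k. op_app R (Cs ! i) (e k)) c ks"
  shows "P_Delta R Rt n D c Cs = map e ks"
proof -
  let ?a = "\<lambda>i k. op_app R (Cs ! i) (e k)"
  let ?S = "{z \<in> tuples R Rt n D. dotR R Cs z < c}"
  have T: "tuples R Rt n D = map e ` index_tuples n dl"
    using Rt e shift by (rule tuples_eq_image)
  have ks: "ks \<in> index_tuples n dl" "weight ?a ks < c"
    and others: "\<And>w. w \<in> index_tuples n dl \<Longrightarrow> weight ?a w < c \<Longrightarrow> w \<noteq> ks \<Longrightarrow> weight ?a w < weight ?a ks"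
    using max by (auto simp: max_below_def)
  have in_S: "map e ks \<in> ?S"
    using ks T by (auto simp: dotR_map)
  have preimage: "\<exists>w\<in>index_tuples n dl. z = map e w \<and> weight ?a w < c" if "z \<in> ?S" for z
    using that T by (auto simp: dotR_map)
  have "maxA R Cs ?S = map e ks"
    unfolding maxA_def
  proof (rule the_equality)
    have "dotR R Cs z \<le> dotR R Cs (map e ks)" if "z \<in> ?S" for z
      using preimage[OF that] others by (fastforce simp: dotR_map)
    with in_S show "map e ks \<in> ?S \<and> (\<forall>z\<in>?S. dotR R Cs z \<le> dotR R Cs (map e ks))"
      by blast
  next
    fix z
    assume z: "z \<in> ?S \<and> (\<forall>z'\<in>?S. dotR R Cs z' \<le> dotR R Cs z)"
    then obtain w where w: "w \<in> index_tuples n dl" "z = map e w" "weight ?a w < c"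
      using preimage by blast
    have "dotR R Cs (map e ks) \<le> dotR R Cs z"
      using z in_S by blast
    then have "weight ?a ks \<le> weight ?a w"
      using w(2) by (simp add: dotR_map)
    then show "z = map e ks"
      using others[OF w(1,3)] w(2) by fastforce
  qed
  then show ?thesis
    using in_S unfolding P_Delta_def by auto
qed

lemma op_sign_eq_0_iff: "op_sign R C = 0 \<longleftrightarrow> op_eq0 R C"
  by (simp add: op_sign_def)

lemma op_pos_if_op_sign_eq_1: "op_sign R C = 1 \<Longrightarrow> op_pos R C"
  by (simp add: op_sign_def split: if_splits)

lemma op_neg_if_op_sign_eq_neg1: "sparse R \<Longrightarrow> op_sign R C = -1 \<Longrightarrow> op_neg R C"
  using sparse_trichotomy[of R C] by (auto simp: op_sign_def split: if_splits)

lemma max_below_cong: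
  assumes "\<And>i k. i < n \<Longrightarrow> a i k = a' i k"
  shows "max_below n dl a c ks \<longleftrightarrow> max_below n dl a' c ks"
proof -
  have "weight a w = weight a' w" if "w \<in> index_tuples n dl" for w
    using that assms by (simp add: weight_def index_tuples_length)
  then show ?thesis
    by (auto simp: max_below_def)
qed

lemma feasible_map_iff:
  assumes Rt: "Rt = range e" and e: "strict_mono e" and shift: "\<And>t. (succR R ^^ D) (e t) = e (t + dl)"
    and len: "length lo = n" "length hi = n"
  shows "map e ks \<in> tuples R Rt n D \<and>
      dagger R A B x y1 y2 (map (map_option e) lo) (map (map_option e) hi) (map e ks) \<longleftrightarrow>
    ks \<in> feasible n dl lo hi (\<lambda>i k. op_app R (A ! i) (e k)) (\<lambda>i k. op_app R (B ! i) (e k)) (x - y1) (x - y2)"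
proof -
  have "map e ks \<in> tuples R Rt n D \<longleftrightarrow> ks \<in> index_tuples n dl"
    using tuples_eq_image[OF Rt e shift] inj_map_eq_map[OF strict_mono_imp_inj_on[OF e]] by auto
  then show ?thesis
    using dagger_map_iff[OF e, of lo ks hi R A B x y1 y2] len
    by (auto simp: feasible_def box_tuples_def index_tuples_length)
qed

lemma extremal_solution_for_spacing:
  assumes sp: "sparse R" and Rt: "Rt = range e" and e: "strict_mono e"
    and shift: "\<And>t. (succR R ^^ D) (e t) = e (t + dl)"
    and n: "0 < n" and len: "length A = n" "length B = n"
    and trends: "\<forall>i<n. trend dl (op_sign R (A ! i)) (\<lambda>k. op_app R (A ! i) (e k)) \<and>
      trend dl (op_sign R (B ! i)) (\<lambda>k. op_app R (B ! i) (e k))"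
    and lex_a: "lex_dominant n dl (\<lambda>i k. op_app R (A ! i) (e k))"
    and lex_b: "lex_dominant n dl (\<lambda>i k. - op_app R (B ! i) (e k))"
    and uv: "length u = n" "length v = n" "\<forall>i<n. \<forall>a. u ! i = Some a \<longrightarrow> a \<in> Rt"
      "\<forall>i<n. \<forall>a. v ! i = Some a \<longrightarrow> a \<in> Rt"
    and z0: "z0 \<in> tuples R Rt n D" "dagger R A B x y1 y2 u v z0"
  shows "(v ! 0 = None \<and>
      ((op_eq0 R (A ! 0) \<and> op_pos R (B ! 0)) \<or> (op_neg R (A ! 0) \<and> op_eq0 R (B ! 0)))) \<or>
    (\<exists>z\<in>tuples R Rt n D. dagger R A B x y1 y2 u v z \<and>
      ((\<exists>i<n. z ! i = (succR R ^^ D) (znext Rt z i)) \<or>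
       (\<exists>i<n. u ! i = Some (z ! i) \<or> v ! i = Some (z ! i)) \<or>
       ((\<forall>i<n. \<not> op_eq0 R (A ! i) \<and> \<not> op_eq0 R (B ! i)) \<and>
        (z = P_Delta R Rt n D (x - y1) A \<or> z = P_Delta R Rt n D (y2 - x) (neg_ops B)))))"
proof -
  let ?a = "\<lambda>i k. op_app R (A ! i) (e k)" and ?b = "\<lambda>i k. op_app R (B ! i) (e k)"
  define lo where "lo = map (map_option (inv e)) u"
  define hi where "hi = map (map_option (inv e)) v"
  have lohi: "u = map (map_option e) lo" "v = map (map_option e) hi" "length lo = n" "length hi = n"
    using options_in_range_eq_map[of u e] options_in_range_eq_map[of v e] uv Rt
    by (auto simp: lo_def hi_def)
  have feasible_iff: "map e ks \<in> tuples R Rt n D \<and> dagger R A B x y1 y2 u v (map e ks) \<longleftrightarrow>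
      ks \<in> feasible n dl lo hi ?a ?b (x - y1) (x - y2)" for ks
    using feasible_map_iff[OF Rt e shift lohi(3,4)] lohi(1,2) by simp
  obtain ks0 where "z0 = map e ks0"
    using z0(1) tuples_eq_image[OF Rt e shift] by auto
  then have "ks0 \<in> feasible n dl lo hi ?a ?b (x - y1) (x - y2)"
    using feasible_iff z0 by blast
  from feasible_boundary_or_max_below[OF n trends lex_a lex_b this]
  consider (exception) "hi ! 0 = None"
      "op_sign R (A ! 0) = 0 \<and> op_sign R (B ! 0) = 1 \<or> op_sign R (A ! 0) = -1 \<and> op_sign R (B ! 0) = 0"
    | (found) ks where "ks \<in> feasible n dl lo hi ?a ?b (x - y1) (x - y2)"
      "on_boundary n dl lo hi ks \<or> (\<forall>i<n. op_sign R (A ! i) \<noteq> 0 \<and> op_sign R (B ! i) \<noteq> 0) \<and>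
        (max_below n dl ?a (x - y1) ks \<or> max_below n dl (\<lambda>i k. - ?b i k) (- (x - y2)) ks)"
    by (elim disjE conjE bexE) blast+
  then show ?thesis
  proof cases
    case exception
    have "v ! 0 = None"
      using exception(1) lohi(2,4) n by simp
    moreover have "(op_eq0 R (A ! 0) \<and> op_pos R (B ! 0)) \<or> (op_neg R (A ! 0) \<and> op_eq0 R (B ! 0))"
      using exception(2) op_sign_eq_0_iff op_pos_if_op_sign_eq_1 op_neg_if_op_sign_eq_neg1[OF sp]
      by metis
    ultimately show ?thesis
      by blast
  next
    case (found ks)
    have z: "map e ks \<in> tuples R Rt n D" "dagger R A B x y1 y2 u v (map e ks)"
      using found(1) feasible_iff by blast+
    have len_ks: "length ks = n"
      using found(1) index_tuples_length by (auto simp: feasible_def box_tuples_def)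
    have "max_below n dl (\<lambda>i k. - ?b i k) (- (x - y2)) ks \<longleftrightarrow>
        max_below n dl (\<lambda>i k. op_app R (neg_ops B ! i) (e k)) (y2 - x) ks"
      unfolding minus_diff_eq using len by (intro max_below_cong) (simp add: neg_ops_def op_app_uminus)
    then have "on_boundary n dl lo hi ks \<or> (\<forall>i<n. \<not> op_eq0 R (A ! i) \<and> \<not> op_eq0 R (B ! i)) \<and>
        (map e ks = P_Delta R Rt n D (x - y1) A \<or> map e ks = P_Delta R Rt n D (y2 - x) (neg_ops B))"
      using found(2) P_Delta_map[OF Rt e shift] op_sign_eq_0_iff by metis
    then show ?thesis
      using on_boundary_map[OF Rt e shift len_ks lohi(3,4)] lohi(1,2) z by blast
  qed
qed

theorem mainTheorem10:
  fixes R Rt :: "nat set" and d n :: nat and A B :: "operator list"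
  assumes "sparse R" and "congruence_periodic R"
    and "d > 0" and "sub_d Rt d R"
    and "n > 0" and "length A = n" and "length B = n"
  shows "\<exists>D0. \<forall>D. d dvd D \<and> D \<ge> D0 \<longrightarrow>
    (\<forall>(x::int) (y1::int) (y2::int) (u::nat option list) (v::nat option list).
       length u = n \<and> length v = n \<and>
       (\<forall>i<n. \<forall>a. u ! i = Some a \<longrightarrow> a \<in> Rt) \<and>
       (\<forall>i<n. \<forall>a. v ! i = Some a \<longrightarrow> a \<in> Rt) \<and>
       (\<exists>z\<in>tuples R Rt n D. dagger R A B x y1 y2 u v z)
       \<longrightarrow>
       (v ! 0 = None \<and>
          ((op_eq0 R (A ! 0) \<and> op_pos R (B ! 0)) \<or> (op_neg R (A ! 0) \<and> op_eq0 R (B ! 0))))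
       \<or>
       (\<exists>z\<in>tuples R Rt n D. dagger R A B x y1 y2 u v z \<and>
          ((\<exists>i<n. z ! i = (succR R ^^ D) (znext Rt z i)) \<or>
           (\<exists>i<n. u ! i = Some (z ! i) \<or> v ! i = Some (z ! i)) \<or>
           ((\<forall>i<n. \<not> op_eq0 R (A ! i) \<and> \<not> op_eq0 R (B ! i)) \<and>
            (z = P_Delta R Rt n D (x - y1) A \<or> z = P_Delta R Rt n D (y2 - x) (neg_ops B))))))"
proof -
  obtain e where Rt: "Rt = range e" and e: "strict_mono e" "\<And>k. e k \<in> R"
    and shift: "\<And>j k. (succR R ^^ (d * j)) (e k) = e (k + j)"
    using sub_d_enumeration[OF sparse_infinite[OF assms(1)] assms(3,4)] by blast
  obtain L where L: "\<And>dl. L \<le> dl \<Longrightarrow>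
      (\<forall>i<n. trend dl (op_sign R (A ! i)) (\<lambda>k. op_app R (A ! i) (e k)) \<and>
             trend dl (op_sign R (B ! i)) (\<lambda>k. op_app R (B ! i) (e k))) \<and>
      lex_dominant n dl (\<lambda>i k. op_app R (A ! i) (e k)) \<and>
      lex_dominant n dl (\<lambda>i k. - op_app R (B ! i) (e k))"
    using eventually_trend_and_lex_dominant[OF assms(1,3,6,7) e shift]
    unfolding eventually_sequentially by blast
  show ?thesis (is "\<exists>D0. \<forall>D. ?spaced D0 D \<longrightarrow> ?claim D")
  proof (rule exI[of _ "d * L"], rule allI, rule impI)
    fix D
    assume "?spaced (d * L) D"
    then obtain dl where "D = d * dl" and "L \<le> dl"
      using assms(3) by (auto elim!: dvdE)
    then have "\<And>t. (succR R ^^ D) (e t) = e (t + dl)"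
      using shift by simp
    then show "?claim D"
      using extremal_solution_for_spacing[OF assms(1) Rt e(1) _ assms(5-7)] L[OF \<open>L \<le> dl\<close>] by blast
  qed
qed

end
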